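(* Let $X$ be a nonempty set and $\mathcal{B}$ a real vector space of bounded functions $X\to\mathbb{R}$ that is closed under pointwise multiplication, pointwise max and min, and satisfies $f\wedge 1\in\mathcal{B}$ for all $f\in\mathcal{B}$. Let $A(\mathcal{B})$ be the supremum-norm closure of $\mathcal{B}+i\mathcal{B}=\{f_1+if_2: f_1,f_2\in\mathcal{B}\}$. Then for every nonnegative real-valued function $f\in A(\mathcal{B})$ there exists a monotonically increasing sequence $(f_n)_n$ of nonnegative functions $f_n\in\mathcal{B}$ converging to $f$ pointwise on $X$. *)

theory Defs
  imports "HOL-Analysis.Analysis"
begin

text \<open>The ground set X is the type 'a (types are nonempty).
  A function space B of real-valued functions on X.\<close>

definition bounded_fun :: "('a \<Rightarrow> real) \<Rightarrow> bool" where
  "bounded_fun f \<longleftrightarrow> bounded (range f)"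

definition complexify :: "('a \<Rightarrow> real) set \<Rightarrow> ('a \<Rightarrow> complex) set" where
  "complexify B = {(\<lambda>x. complex_of_real (f1 x) + \<i> * complex_of_real (f2 x)) | f1 f2. f1 \<in> B \<and> f2 \<in> B}"

definition A_alg :: "('a \<Rightarrow> real) set \<Rightarrow> ('a \<Rightarrow> complex) set" where
  "A_alg B = {g. \<forall>e>0. \<exists>h\<in>complexify B. \<forall>x. cmod (g x - h x) \<le> e}"

end

theory Submission
  imports Defs
begin

text \<open>Approximate f uniformly by the real parts g_n \<in> B of elements of B + iB, with errors
  e_n \<rightarrow> 0. The functions max (g_n - e_n) 0 = g_n - e_n * min (g_n / e_n) 1 lie in B, stay below f
  (as f \<ge> 0) and converge to f; their running maxima then form a monotone sequence in B with
  the same limit.\<close>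

lemma A_alg_real_approx:
  assumes "(\<lambda>x. complex_of_real (f x)) \<in> A_alg B" and "e > 0"
  obtains g where "g \<in> B" and "\<And>x. \<bar>f x - g x\<bar> \<le> e"
proof -
  obtain h where "h \<in> complexify B" and h: "\<And>x. cmod (complex_of_real (f x) - h x) \<le> e"
    using assms unfolding A_alg_def by blast
  then obtain g g' where "g \<in> B" and h_eq: "h = (\<lambda>x. complex_of_real (g x) + \<i> * complex_of_real (g' x))"
    unfolding complexify_def by blast
  have "\<bar>f x - g x\<bar> \<le> e" for x
    using abs_Re_le_cmod[of "complex_of_real (f x) - h x"] h[of x] by (simp add: h_eq)
  with \<open>g \<in> B\<close> show thesis by (rule that)
qed

lemma shifted_positive_part_in:
  assumes add: "\<forall>g\<in>B. \<forall>h\<in>B. (\<lambda>x. g x + h x) \<in> B"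
    and scale: "\<forall>g\<in>B. \<forall>c::real. (\<lambda>x. c * g x) \<in> B"
    and min1: "\<forall>g\<in>B. (\<lambda>x. min (g x) 1) \<in> B"
    and "g \<in> B" and "e > 0"
  shows "(\<lambda>x. max (g x - e) 0) \<in> B"
proof -
  have "(\<lambda>x. min (g x / e) 1) \<in> B"
    using min1 scale \<open>g \<in> B\<close> by (auto simp: divide_inverse mult.commute)
  then have "(\<lambda>x. (- e) * min (g x / e) 1) \<in> B"
    using scale by (rule_tac bspec) auto
  then have "(\<lambda>x. g x + (- e) * min (g x / e) 1) \<in> B"
    by (rule add[rule_format, OF \<open>g \<in> B\<close>])
  moreover have "g x + (- e) * min (g x / e) 1 = max (g x - e) 0" for x
  proof (cases "g x \<le> e")
    case True
    with \<open>e > 0\<close> have "g x / e \<le> 1" by simp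
    with True show ?thesis using \<open>e > 0\<close> by simp
  next
    case False
    with \<open>e > 0\<close> have "1 < g x / e" by simp
    with False show ?thesis by simp
  qed
  ultimately show ?thesis by simp
qed

lemma nonneg_approx_from_below:
  assumes add: "\<forall>g\<in>B. \<forall>h\<in>B. (\<lambda>x. g x + h x) \<in> B"
    and scale: "\<forall>g\<in>B. \<forall>c::real. (\<lambda>x. c * g x) \<in> B"
    and min1: "\<forall>g\<in>B. (\<lambda>x. min (g x) 1) \<in> B"
    and fA: "(\<lambda>x. complex_of_real (f x)) \<in> A_alg B"
    and fnn: "\<And>x. f x \<ge> 0"
  obtains k where "\<And>n. k n \<in> B" and "\<And>n x. 0 \<le> k n x" and "\<And>n x. k n x \<le> f x"
    and "\<And>x. (\<lambda>n. k n x) \<longlonglongrightarrow> f x"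
proof -
  define e :: "nat \<Rightarrow> real" where "e n = 1 / real (Suc n)" for n
  have e_pos: "e n > 0" for n by (simp add: e_def)
  have "\<exists>g\<in>B. \<forall>x. \<bar>f x - g x\<bar> \<le> e n" for n
    using A_alg_real_approx[OF fA e_pos] by metis
  then obtain g where g: "\<And>n. g n \<in> B" and g_close: "\<And>n x. \<bar>f x - g n x\<bar> \<le> e n"
    by metis
  define k where "k n x = max (g n x - e n) 0" for n x
  have k_in: "k n \<in> B" for n
    unfolding k_def using shifted_positive_part_in[OF add scale min1 g e_pos] .
  have k_nonneg: "0 \<le> k n x" and k_le: "k n x \<le> f x" and k_ge: "f x - 2 * e n \<le> k n x" for n x
    using g_close[of x n] fnn[of x] by (auto simp: k_def abs_le_iff)
  have "(\<lambda>n. k n x) \<longlonglongrightarrow> f x" for x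
  proof (rule tendsto_sandwich)
    show "\<forall>\<^sub>F n in sequentially. f x - 2 * e n \<le> k n x"
      using k_ge by simp
    show "\<forall>\<^sub>F n in sequentially. k n x \<le> f x"
      using k_le by simp
    have "e \<longlonglongrightarrow> 0"
      unfolding e_def using LIMSEQ_inverse_real_of_nat by (simp add: inverse_eq_divide)
    from tendsto_diff[OF tendsto_const tendsto_mult[OF tendsto_const this]]
    show "(\<lambda>n. f x - 2 * e n) \<longlonglongrightarrow> f x"
      by simp
  qed simp
  with k_in k_nonneg k_le show thesis by (rule that)
qed

primrec running_max :: "(nat \<Rightarrow> 'a \<Rightarrow> 'b::linorder) \<Rightarrow> nat \<Rightarrow> 'a \<Rightarrow> 'b" where
  "running_max k 0 = k 0"
| "running_max k (Suc n) = (\<lambda>x. max (running_max k n x) (k (Suc n) x))"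

lemma running_max_in:
  assumes "\<forall>g\<in>B. \<forall>h\<in>B. (\<lambda>x. max (g x) (h x)) \<in> B" and "\<And>n. k n \<in> B"
  shows "running_max k n \<in> B"
  using assms by (induction n) auto

lemma running_max_Suc_ge: "running_max k n x \<le> running_max k (Suc n) x"
  by simp

lemma running_max_ge: "k n x \<le> running_max k n x"
  by (cases n) auto

lemma running_max_le: "(\<And>n. k n x \<le> c) \<Longrightarrow> running_max k n x \<le> c"
  by (induction n) auto

lemma running_max_tendsto:
  fixes k :: "nat \<Rightarrow> 'a \<Rightarrow> 'b::linorder_topology"
  assumes lim: "(\<lambda>n. k n x) \<longlonglongrightarrow> L" and le: "\<And>n. k n x \<le> L"
  shows "(\<lambda>n. running_max k n x) \<longlonglongrightarrow> L"
proof (rule tendsto_sandwich[OF _ _ lim tendsto_const])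
  show "\<forall>\<^sub>F n in sequentially. k n x \<le> running_max k n x"
    by (simp add: running_max_ge)
  show "\<forall>\<^sub>F n in sequentially. running_max k n x \<le> L"
    using le by (simp add: running_max_le)
qed

theorem mainTheorem5:
  fixes B :: "('a \<Rightarrow> real) set" and f :: "'a \<Rightarrow> real"
  assumes bdd: "\<forall>g\<in>B. bounded_fun g"
    and zero: "(\<lambda>x. 0) \<in> B"
    and add: "\<forall>g\<in>B. \<forall>h\<in>B. (\<lambda>x. g x + h x) \<in> B"
    and scale: "\<forall>g\<in>B. \<forall>c::real. (\<lambda>x. c * g x) \<in> B"
    and mult: "\<forall>g\<in>B. \<forall>h\<in>B. (\<lambda>x. g x * h x) \<in> B"
    and maxc: "\<forall>g\<in>B. \<forall>h\<in>B. (\<lambda>x. max (g x) (h x)) \<in> B"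
    and minc: "\<forall>g\<in>B. \<forall>h\<in>B. (\<lambda>x. min (g x) (h x)) \<in> B"
    and min1: "\<forall>g\<in>B. (\<lambda>x. min (g x) 1) \<in> B"
    and fA: "(\<lambda>x. complex_of_real (f x)) \<in> A_alg B"
    and fnn: "\<forall>x. f x \<ge> 0"
  shows "\<exists>F :: nat \<Rightarrow> 'a \<Rightarrow> real.
           (\<forall>n. F n \<in> B) \<and> (\<forall>n x. F n x \<ge> 0) \<and>
           (\<forall>n x. F n x \<le> F (Suc n) x) \<and>
           (\<forall>x. (\<lambda>n. F n x) \<longlonglongrightarrow> f x)"
proof -
  obtain k where kB: "\<And>n. k n \<in> B" and k_nonneg: "\<And>n x. 0 \<le> k n x"
    and k_le: "\<And>n x. k n x \<le> f x" and k_lim: "\<And>x. (\<lambda>n. k n x) \<longlonglongrightarrow> f x"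
    using nonneg_approx_from_below[OF add scale min1 fA] fnn by metis
  have "0 \<le> running_max k n x" for n x
    using k_nonneg running_max_ge by (rule order_trans)
  then show ?thesis
    using running_max_in[OF maxc kB] running_max_Suc_ge running_max_tendsto[OF k_lim k_le]
    by (intro exI[of _ "running_max k"] conjI allI)
qed

end
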